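(* Let $\mathcal{E}$ be an even Dirichlet form on $L^2(X,m)$ and let $\mathfrak{D}$ be its Dirichlet space. Assume that the embedding $\mathfrak{D}\hookrightarrow L^2(X,m)$ is compact and that, for $f\in L^2(X,m)$, $\mathcal{E}(f)=0$ holds if and only if $f=0$. Then $\mathfrak{D}$ satisfies a Poincaré inequality: there is a constant $C>0$ such that $\|f\|_{\mathfrak{D}}\le C\,|f|_{\mathfrak{D}}$ for all $f\in\mathfrak{D}$ (equivalently, there is $C>0$ with $\|f\|_{L^2(X,m)}\le C\,|f|_{\mathfrak{D}}$ for all $f\in\mathfrak{D}$).
   Context: Standing setting: $X$ is a Hausdorff topological space and $m$ is a Borel measure on $X$ with full support, i.e. no nonempty open subset of $X$ has $m$-measure zero. $L^2(X,m)$ is the real $L^2$ space. A Dirichlet form is a functional $\mathcal{E}:L^2(X,m)\to[0,\infty]$ that is convex, lower semicontinuous and densely defined (its effective domain $\mathrm{dom}(\mathcal{E})=\{u:\mathcal{E}(u)<\infty\}$ is dense in $L^2(X,m)$), and such that for all $u,v\in L^2(X,m)$ and $\alpha>0$: (1) $\mathcal{E}(u\wedge v)+\mathcal{E}(u\vee v)\le \mathcal{E}(u)+\mathcal{E}(v)$; (2) $\mathcal{E}\big(v+\tfrac12((u-v+\alpha)_+-(u-v-\alpha)_-)\big)+\mathcal{E}\big(u-\tfrac12((u-v+\alpha)_+-(u-v-\alpha)_-)\big)\le \mathcal{E}(u)+\mathcal{E}(v)$, where $(\cdot)_+$, $(\cdot)_-$ denote positive and negative parts. $\mathcal{E}$ is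 called even if $\mathcal{E}(0)=0$ and $\mathcal{E}(-u)=\mathcal{E}(u)$ for all $u$. Set $\mathcal{E}_1(u)=\|u\|_{L^2(X,m)}^2+\mathcal{E}(u)$. The Dirichlet space is $\mathfrak{D}=\{u\in L^2(X,m):\exists\lambda>0,\ \mathcal{E}_1(\lambda u)<\infty\}$ with the Minkowski norm $\|u\|_{\mathfrak{D}}=\inf\{\lambda>0:\mathcal{E}_1(u/\lambda)\le 1\}$ and the seminorm $|u|_{\mathfrak{D}}=\inf\{\lambda>0:\mathcal{E}(u/\lambda)\le 1\}$. *)

theory Defs
  imports "HOL-Analysis.Analysis"
begin

text \<open>The real space L^2(X,m) is represented by square-integrable Borel functions;
  functionals on L^2 are required to be invariant under a.e. equality
  (so that they are functionals on equivalence classes).\<close>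

definition L2 :: "'a measure \<Rightarrow> ('a \<Rightarrow> real) set" where
  "L2 M = {f. f \<in> borel_measurable M \<and> integrable M (\<lambda>x. (f x)^2)}"

definition L2norm :: "'a measure \<Rightarrow> ('a \<Rightarrow> real) \<Rightarrow> real" where
  "L2norm M f = sqrt (\<integral>x. (f x)^2 \<partial>M)"

definition L2_tendsto :: "'a measure \<Rightarrow> (nat \<Rightarrow> 'a \<Rightarrow> real) \<Rightarrow> ('a \<Rightarrow> real) \<Rightarrow> bool" where
  "L2_tendsto M u g \<longleftrightarrow> (\<lambda>n. L2norm M (\<lambda>x. u n x - g x)) \<longlonglongrightarrow> 0"

definition pos_part :: "real \<Rightarrow> real" where "pos_part w = max w 0"
definition neg_part :: "real \<Rightarrow> real" where "neg_part w = max (- w) 0"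

definition dirichlet_form :: "'a measure \<Rightarrow> (('a \<Rightarrow> real) \<Rightarrow> ennreal) \<Rightarrow> bool" where
  "dirichlet_form M E \<longleftrightarrow>
     \<comment> \<open>well defined on L^2 equivalence classes\<close>
     (\<forall>u\<in>L2 M. \<forall>v\<in>L2 M. (AE x in M. u x = v x) \<longrightarrow> E u = E v)
     \<comment> \<open>convex\<close>
   \<and> (\<forall>u\<in>L2 M. \<forall>v\<in>L2 M. \<forall>t::real. 0 \<le> t \<and> t \<le> 1 \<longrightarrow>
        E (\<lambda>x. t * u x + (1 - t) * v x) \<le> ennreal t * E u + ennreal (1 - t) * E v)
     \<comment> \<open>lower semicontinuous w.r.t. the L^2 norm\<close>
   \<and> (\<forall>u g. (\<forall>n. u n \<in> L2 M) \<and> g \<in> L2 M \<and> L2_tendsto M u g \<longrightarrow>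
        E g \<le> liminf (\<lambda>n. E (u n)))
     \<comment> \<open>densely defined\<close>
   \<and> (\<forall>u\<in>L2 M. \<forall>\<epsilon>>0. \<exists>v\<in>L2 M. E v < \<infinity> \<and> L2norm M (\<lambda>x. u x - v x) < \<epsilon>)
     \<comment> \<open>condition (1)\<close>
   \<and> (\<forall>u\<in>L2 M. \<forall>v\<in>L2 M.
        E (\<lambda>x. min (u x) (v x)) + E (\<lambda>x. max (u x) (v x)) \<le> E u + E v)
     \<comment> \<open>condition (2)\<close>
   \<and> (\<forall>u\<in>L2 M. \<forall>v\<in>L2 M. \<forall>\<alpha>::real. \<alpha> > 0 \<longrightarrow>
        E (\<lambda>x. v x + (pos_part (u x - v x + \<alpha>) - neg_part (u x - v x - \<alpha>)) / 2)
      + E (\<lambda>x. u x - (pos_part (u x - v x + \<alpha>) - neg_part (u x - v x - \<alpha>)) / 2)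
        \<le> E u + E v)"

definition even_form :: "'a measure \<Rightarrow> (('a \<Rightarrow> real) \<Rightarrow> ennreal) \<Rightarrow> bool" where
  "even_form M E \<longleftrightarrow> E (\<lambda>x. 0) = 0 \<and> (\<forall>u\<in>L2 M. E (\<lambda>x. - u x) = E u)"

definition E1 :: "'a measure \<Rightarrow> (('a \<Rightarrow> real) \<Rightarrow> ennreal) \<Rightarrow> ('a \<Rightarrow> real) \<Rightarrow> ennreal" where
  "E1 M E u = ennreal ((L2norm M u)^2) + E u"

definition dirichlet_space :: "'a measure \<Rightarrow> (('a \<Rightarrow> real) \<Rightarrow> ennreal) \<Rightarrow> ('a \<Rightarrow> real) set" where
  "dirichlet_space M E = {u \<in> L2 M. \<exists>lam::real. lam > 0 \<and> E1 M E (\<lambda>x. lam * u x) < \<infinity>}"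

definition D_norm :: "'a measure \<Rightarrow> (('a \<Rightarrow> real) \<Rightarrow> ennreal) \<Rightarrow> ('a \<Rightarrow> real) \<Rightarrow> real" where
  "D_norm M E u = Inf {lam::real. lam > 0 \<and> E1 M E (\<lambda>x. u x / lam) \<le> 1}"

definition D_seminorm :: "'a measure \<Rightarrow> (('a \<Rightarrow> real) \<Rightarrow> ennreal) \<Rightarrow> ('a \<Rightarrow> real) \<Rightarrow> real" where
  "D_seminorm M E u = Inf {lam::real. lam > 0 \<and> E (\<lambda>x. u x / lam) \<le> 1}"

definition compact_embedding :: "'a measure \<Rightarrow> (('a \<Rightarrow> real) \<Rightarrow> ennreal) \<Rightarrow> bool" where
  "compact_embedding M E \<longleftrightarrow>
     (\<forall>f. (\<forall>n. f n \<in> dirichlet_space M E) \<and> (\<exists>B::real. \<forall>n. D_norm M E (f n) \<le> B) \<longrightarrow>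
        (\<exists>(r::nat \<Rightarrow> nat) g. strict_mono r \<and> g \<in> L2 M \<and> L2_tendsto M (f \<circ> r) g))"

end

theory Submission
  imports Defs
begin

text \<open>Both norms are Minkowski gauges of functionals that convexity and E(0) = 0 make
  subhomogeneous. If no Poincare constant exists, there are f_n with norm 1 in the Dirichlet
  space and seminorm below 1/(n+1); subhomogeneity turns the seminorm bound into
  E(c f_n) \<le> c/(n+1), so the energies tend to 0. By compactness a subsequence converges in
  L^2; lower semicontinuity gives the limit zero energy, so it vanishes, and the L^2 norms
  of the f_n tend to 0 along the subsequence. For large n this yields E_1(2 f_n) \<le> 1, i.e.
  the Dirichlet-space norm of f_n is at most 1/2.\<close>

lemma L2_cmult: "f \<in> L2 M \<Longrightarrow> (\<lambda>x. c * f x) \<in> L2 M"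
  unfolding L2_def by (auto simp: power_mult_distrib)

lemma L2_divide: "f \<in> L2 M \<Longrightarrow> (\<lambda>x. f x / c) \<in> L2 M"
  using L2_cmult[of f M "1 / c"] by simp

lemma L2norm_cmult: "L2norm M (\<lambda>x. c * f x) = \<bar>c\<bar> * L2norm M f"
  by (simp add: L2norm_def power_mult_distrib real_sqrt_mult)

lemma L2norm_cong_AE:
  assumes "f \<in> borel_measurable M" "g \<in> borel_measurable M" "AE x in M. f x = g x"
  shows "L2norm M f = L2norm M g"
  unfolding L2norm_def using assms by (intro arg_cong[where f = sqrt] integral_cong_AE) auto

lemma dirichlet_form_convex:
  assumes "dirichlet_form M E" "u \<in> L2 M" "v \<in> L2 M" "0 \<le> t" "t \<le> 1"
  shows "E (\<lambda>x. t * u x + (1 - t) * v x) \<le> ennreal t * E u + ennreal (1 - t) * E v"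
  using assms(1)[unfolded dirichlet_form_def, THEN conjunct2, THEN conjunct1] assms(2-) by blast

lemma dirichlet_form_lsc:
  assumes "dirichlet_form M E" "\<And>n. u n \<in> L2 M" "g \<in> L2 M" "L2_tendsto M u g"
  shows "E g \<le> liminf (\<lambda>n. E (u n))"
  using assms(1)[unfolded dirichlet_form_def, THEN conjunct2, THEN conjunct2, THEN conjunct1]
    assms(2-) by blast

definition subhomogeneous :: "'a measure \<Rightarrow> (('a \<Rightarrow> real) \<Rightarrow> ennreal) \<Rightarrow> bool" where
  "subhomogeneous M \<Phi> \<longleftrightarrow>
     (\<forall>h\<in>L2 M. \<forall>s::real. 0 \<le> s \<and> s \<le> 1 \<longrightarrow> \<Phi> (\<lambda>x. s * h x) \<le> ennreal s * \<Phi> h)"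

lemma subhomogeneousD:
  "subhomogeneous M \<Phi> \<Longrightarrow> h \<in> L2 M \<Longrightarrow> 0 \<le> s \<Longrightarrow> s \<le> 1 \<Longrightarrow>
    \<Phi> (\<lambda>x. s * h x) \<le> ennreal s * \<Phi> h"
  unfolding subhomogeneous_def by blast

lemma subhomogeneous_dirichlet_form:
  assumes DF: "dirichlet_form M E" and E0: "E (\<lambda>x. 0) = 0"
  shows "subhomogeneous M E"
  unfolding subhomogeneous_def
proof (intro ballI allI impI)
  fix h and s :: real
  assume h: "h \<in> L2 M" and s: "0 \<le> s \<and> s \<le> 1"
  have zero: "(\<lambda>x. 0) \<in> L2 M"
    unfolding L2_def by simp
  have "E (\<lambda>x. s * h x + (1 - s) * 0) \<le> ennreal s * E h + ennreal (1 - s) * E (\<lambda>x. 0)"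
    using dirichlet_form_convex[OF DF h zero] s by blast
  then show "E (\<lambda>x. s * h x) \<le> ennreal s * E h"
    using E0 by simp
qed

lemma subhomogeneous_E1:
  assumes "subhomogeneous M E"
  shows "subhomogeneous M (E1 M E)"
  unfolding subhomogeneous_def
proof (intro ballI allI impI)
  fix h and s :: real
  assume h: "h \<in> L2 M" and s: "0 \<le> s \<and> s \<le> 1"
  have "(L2norm M (\<lambda>x. s * h x))\<^sup>2 = s\<^sup>2 * (L2norm M h)\<^sup>2"
    by (simp add: L2norm_cmult power_mult_distrib)
  also have "\<dots> \<le> s * (L2norm M h)\<^sup>2"
    using s by (intro mult_right_mono) (auto simp: power2_eq_square mult_left_le)
  finally have "ennreal ((L2norm M (\<lambda>x. s * h x))\<^sup>2) \<le> ennreal s * ennreal ((L2norm M h)\<^sup>2)"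
    using s by (simp add: ennreal_mult'[symmetric] ennreal_leI)
  moreover have "E (\<lambda>x. s * h x) \<le> ennreal s * E h"
    using assms h s unfolding subhomogeneous_def by blast
  ultimately show "E1 M E (\<lambda>x. s * h x) \<le> ennreal s * E1 M E h"
    unfolding E1_def by (simp add: distrib_left add_mono)
qed

definition minkowski_gauge :: "(('a \<Rightarrow> real) \<Rightarrow> ennreal) \<Rightarrow> ('a \<Rightarrow> real) \<Rightarrow> real" where
  "minkowski_gauge \<Phi> f = Inf {r. r > 0 \<and> \<Phi> (\<lambda>x. f x / r) \<le> 1}"

lemma D_norm_eq_minkowski_gauge: "D_norm M E = minkowski_gauge (E1 M E)"
  unfolding D_norm_def minkowski_gauge_def ..

lemma D_seminorm_eq_minkowski_gauge: "D_seminorm M E = minkowski_gauge E"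
  unfolding D_seminorm_def minkowski_gauge_def ..

lemma minkowski_gauge_le:
  assumes "r > 0" "\<Phi> (\<lambda>x. f x / r) \<le> 1"
  shows "minkowski_gauge \<Phi> f \<le> r"
  unfolding minkowski_gauge_def using assms by (intro cInf_lower bdd_belowI[of _ 0]) auto

lemma minkowski_gauge_nonneg:
  assumes "\<exists>r>0. \<Phi> (\<lambda>x. f x / r) \<le> 1"
  shows "0 \<le> minkowski_gauge \<Phi> f"
  unfolding minkowski_gauge_def using assms by (intro cInf_greatest) auto

lemma minkowski_gauge_finite_divide:
  fixes f :: "'a \<Rightarrow> real"
  assumes "a > 0" "\<exists>r>0. \<Phi> (\<lambda>x. f x / r) \<le> 1"
  shows "\<exists>r>0. \<Phi> (\<lambda>x. f x / a / r) \<le> 1"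
proof -
  obtain r where r: "r > 0" "\<Phi> (\<lambda>x. f x / r) \<le> 1"
    using assms(2) by blast
  have "(\<lambda>x. f x / a / (r / a)) = (\<lambda>x. f x / r)"
    using assms(1) r(1) by (intro ext) (simp add: field_simps)
  then show ?thesis
    using assms(1) r by (intro exI[of _ "r / a"]) auto
qed

lemma minkowski_gauge_divide:
  assumes a: "a > 0" and finite: "\<exists>r>0. \<Phi> (\<lambda>x. f x / r) \<le> 1"
  shows "minkowski_gauge \<Phi> (\<lambda>x. f x / a) = minkowski_gauge \<Phi> f / a"
proof (rule antisym)
  have "a * minkowski_gauge \<Phi> (\<lambda>x. f x / a) \<le> minkowski_gauge \<Phi> f"
    unfolding minkowski_gauge_def [of _ f]
  proof (rule cInf_greatest)
    fix r assume r: "r \<in> {r. r > 0 \<and> \<Phi> (\<lambda>x. f x / r) \<le> 1}"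
    then have "minkowski_gauge \<Phi> (\<lambda>x. f x / a) \<le> r / a"
      using a by (intro minkowski_gauge_le) (auto simp: mult.commute)
    then show "a * minkowski_gauge \<Phi> (\<lambda>x. f x / a) \<le> r"
      using a by (simp add: field_simps)
  qed (use finite in auto)
  then show "minkowski_gauge \<Phi> (\<lambda>x. f x / a) \<le> minkowski_gauge \<Phi> f / a"
    using a by (simp add: field_simps)
next
  show "minkowski_gauge \<Phi> f / a \<le> minkowski_gauge \<Phi> (\<lambda>x. f x / a)"
    unfolding minkowski_gauge_def [of _ "\<lambda>x. f x / a"]
  proof (intro cInf_greatest)
    fix r assume r: "r \<in> {r. r > 0 \<and> \<Phi> (\<lambda>x. f x / a / r) \<le> 1}"
    then have "minkowski_gauge \<Phi> f \<le> a * r"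
      using a by (intro minkowski_gauge_le) (auto simp: mult.commute)
    then show "minkowski_gauge \<Phi> f / a \<le> r"
      using a by (simp add: field_simps)
  qed (use minkowski_gauge_finite_divide[of a \<Phi> f, OF a finite] in auto)
qed

lemma subhomogeneous_cmult_le_of_minkowski_gauge_less:
  assumes sh: "subhomogeneous M \<Phi>" and f: "f \<in> L2 M"
    and finite: "\<exists>r>0. \<Phi> (\<lambda>x. f x / r) \<le> 1"
    and less: "minkowski_gauge \<Phi> f < s" and c: "0 < c" "c * s \<le> 1"
  shows "\<Phi> (\<lambda>x. c * f x) \<le> ennreal (c * s)"
proof -
  obtain r where r: "r > 0" "\<Phi> (\<lambda>x. f x / r) \<le> 1" "r < s"
    using cInf_lessD[of "{r. r > 0 \<and> \<Phi> (\<lambda>x. f x / r) \<le> 1}" s] finite less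
    unfolding minkowski_gauge_def by auto
  have "c * r \<le> c * s"
    using r c by simp
  then have "c * r \<le> 1"
    using c by linarith
  have rescale: "(\<lambda>x. c * f x) = (\<lambda>x. (c * r) * (f x / r))"
    using r by auto
  have "\<Phi> (\<lambda>x. c * f x) \<le> ennreal (c * r) * \<Phi> (\<lambda>x. f x / r)"
    unfolding rescale using r c \<open>c * r \<le> 1\<close>
    by (intro subhomogeneousD[OF sh L2_divide[OF f]]) auto
  also have "\<dots> \<le> ennreal (c * r)"
    using mult_left_mono[OF r(2), of "ennreal (c * r)"] by simp
  also have "\<dots> \<le> ennreal (c * s)"
    using \<open>c * r \<le> c * s\<close> by (rule ennreal_leI)
  finally show ?thesis .
qed

lemma subhomogeneous_minkowski_gauge_finite:
  assumes sh: "subhomogeneous M \<Phi>" and f: "f \<in> L2 M"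
    and l: "l > 0" "\<Phi> (\<lambda>x. l * f x) < \<infinity>"
  shows "\<exists>r>0. \<Phi> (\<lambda>x. f x / r) \<le> 1"
proof -
  obtain k where k: "0 \<le> k" "\<Phi> (\<lambda>x. l * f x) = ennreal k"
    using l(2) by (cases "\<Phi> (\<lambda>x. l * f x)" rule: ennreal_cases) auto
  define s where "s = 1 / (k + 1)"
  have s: "0 \<le> s" "s \<le> 1"
    using k by (auto simp: s_def)
  have rescale: "(\<lambda>x. f x / ((k + 1) / l)) = (\<lambda>x. s * (l * f x))"
    using l k by (auto simp: s_def field_simps)
  have "\<Phi> (\<lambda>x. f x / ((k + 1) / l)) \<le> ennreal s * ennreal k"
    unfolding rescale k(2)[symmetric] by (rule subhomogeneousD[OF sh L2_cmult[OF f] s])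
  also have "\<dots> = ennreal (k / (k + 1))"
    using k by (simp add: ennreal_mult'[symmetric] s_def)
  also have "\<dots> \<le> 1"
    using k by simp
  finally show ?thesis
    using l k by (intro exI[of _ "(k + 1) / l"]) auto
qed

lemma dirichlet_space_iff:
  assumes "subhomogeneous M E"
  shows "f \<in> dirichlet_space M E \<longleftrightarrow> f \<in> L2 M \<and> (\<exists>r>0. E1 M E (\<lambda>x. f x / r) \<le> 1)"
proof
  assume "f \<in> dirichlet_space M E"
  then show "f \<in> L2 M \<and> (\<exists>r>0. E1 M E (\<lambda>x. f x / r) \<le> 1)"
    using subhomogeneous_minkowski_gauge_finite[OF subhomogeneous_E1[OF assms]]
    unfolding dirichlet_space_def by blast
next
  assume "f \<in> L2 M \<and> (\<exists>r>0. E1 M E (\<lambda>x. f x / r) \<le> 1)"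
  then obtain r where "f \<in> L2 M" "r > 0" "E1 M E (\<lambda>x. (1 / r) * f x) \<le> 1"
    by auto
  then show "f \<in> dirichlet_space M E"
    unfolding dirichlet_space_def by (intro CollectI conjI exI[of _ "1 / r"]) (auto intro: le_less_trans[OF _ ennreal_one_less_top])
qed

lemma E_le_E1: "E f \<le> E1 M E f"
  unfolding E1_def by simp

lemma not_poincare_imp_normalized_sequence:
  assumes sh: "subhomogeneous M E"
    and no_poincare: "\<not> (\<exists>C>0. \<forall>f\<in>dirichlet_space M E. D_norm M E f \<le> C * D_seminorm M E f)"
  obtains g where "\<And>n. g n \<in> dirichlet_space M E" "\<And>n. D_norm M E (g n) = 1"
    "\<And>n. D_seminorm M E (g n) < 1 / (real n + 1)"
proof -
  have "\<exists>f\<in>dirichlet_space M E. (real n + 1) * D_seminorm M E f < D_norm M E f" for n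
  proof -
    have "real n + 1 > 0"
      by simp
    then show ?thesis
      using no_poincare by (meson not_le)
  qed
  then obtain F where F_D: "\<And>n. F n \<in> dirichlet_space M E"
    and F_ratio: "\<And>n. (real n + 1) * D_seminorm M E (F n) < D_norm M E (F n)"
    by metis
  define a where "a n = D_norm M E (F n)" for n
  have F_L2: "F n \<in> L2 M" and F_norm_finite: "\<exists>r>0. E1 M E (\<lambda>x. F n x / r) \<le> 1" for n
    using F_D[of n] dirichlet_space_iff[OF sh] by blast+
  then have F_seminorm_finite: "\<exists>r>0. E (\<lambda>x. F n x / r) \<le> 1" for n
    by (meson E_le_E1 order.trans)
  have a_pos: "a n > 0" for n
  proof -
    have "0 \<le> (real n + 1) * D_seminorm M E (F n)"
      using minkowski_gauge_nonneg[of E "F n", OF F_seminorm_finite]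
      by (simp add: D_seminorm_eq_minkowski_gauge)
    then show ?thesis
      using F_ratio[of n] unfolding a_def by linarith
  qed
  show thesis
  proof (rule that[of "\<lambda>n x. F n x / a n"])
    show "(\<lambda>x. F n x / a n) \<in> dirichlet_space M E" for n
      using dirichlet_space_iff[OF sh] L2_divide[OF F_L2]
        minkowski_gauge_finite_divide[of "a n" "E1 M E" "F n", OF a_pos F_norm_finite] by blast
    show "D_norm M E (\<lambda>x. F n x / a n) = 1" for n
      using minkowski_gauge_divide[of "a n" "E1 M E" "F n", OF a_pos F_norm_finite] a_pos[of n]
      by (simp add: a_def D_norm_eq_minkowski_gauge)
    show "D_seminorm M E (\<lambda>x. F n x / a n) < 1 / (real n + 1)" for n
    proof -
      have "D_seminorm M E (F n) / a n < 1 / (real n + 1)"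
        using F_ratio[of n] a_pos[of n] unfolding a_def by (simp add: field_simps)
      then show ?thesis
        using minkowski_gauge_divide[of "a n" E "F n", OF a_pos F_seminorm_finite]
        by (simp add: D_seminorm_eq_minkowski_gauge)
    qed
  qed
qed

lemma D_norm_le_half:
  assumes L2_small: "L2norm M f \<le> 1/4" and energy_small: "E (\<lambda>x. 2 * f x) \<le> ennreal (1/2)"
  shows "D_norm M E f \<le> 1/2"
proof -
  have "(L2norm M (\<lambda>x. 2 * f x))\<^sup>2 \<le> (1/2)\<^sup>2"
    using L2_small by (intro power_mono) (auto simp: L2norm_cmult L2norm_def)
  then have L2_part: "ennreal ((L2norm M (\<lambda>x. 2 * f x))\<^sup>2) \<le> ennreal (1/4)"
    by (simp add: power2_eq_square ennreal_leI)
  have "(\<lambda>x. f x / (1/2)) = (\<lambda>x. 2 * f x)"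
    by (simp add: mult.commute)
  then have "E1 M E (\<lambda>x. f x / (1/2)) \<le> ennreal (1/4) + ennreal (1/2)"
    unfolding E1_def using add_mono[OF L2_part energy_small] by simp
  also have "\<dots> = ennreal (1/4 + 1/2)"
    by (rule ennreal_plus[symmetric]) auto
  also have "\<dots> \<le> 1"
    by (simp add: ennreal_le_1)
  finally show ?thesis
    unfolding D_norm_eq_minkowski_gauge by (intro minkowski_gauge_le) auto
qed

lemma compact_embedding_L2norm_subseq_tendsto_0:
  assumes DF: "dirichlet_form M E" and compact: "compact_embedding M E"
    and kernel: "\<forall>f\<in>L2 M. E f = 0 \<longrightarrow> (AE x in M. f x = 0)"
    and g_D: "\<And>n. g n \<in> dirichlet_space M E" and g_bounded: "\<And>n. D_norm M E (g n) \<le> B"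
    and energy: "(\<lambda>n. E (g n)) \<longlonglongrightarrow> 0"
  obtains r where "strict_mono r" "(\<lambda>k. L2norm M (g (r k))) \<longlonglongrightarrow> 0"
proof -
  obtain r h where r: "strict_mono r" and h: "h \<in> L2 M" and conv: "L2_tendsto M (g \<circ> r) h"
    using compact g_D g_bounded unfolding compact_embedding_def by blast
  have g_L2: "g n \<in> L2 M" for n
    using g_D unfolding dirichlet_space_def by blast
  have "E h \<le> liminf (\<lambda>k. E (g (r k)))"
    using dirichlet_form_lsc[OF DF _ h conv] g_L2 by (simp add: o_def)
  also have "\<dots> = 0"
    using LIMSEQ_subseq_LIMSEQ[OF energy r] by (simp add: lim_imp_Liminf o_def)
  finally have "AE x in M. h x = 0"
    using kernel h by simp
  then have "L2norm M (\<lambda>x. g (r k) x - h x) = L2norm M (g (r k))" for k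
    using g_L2[of "r k"] h unfolding L2_def by (intro L2norm_cong_AE) auto
  then show thesis
    using that[OF r] conv unfolding L2_tendsto_def by simp
qed

lemma no_normalized_sequence:
  assumes DF: "dirichlet_form M E" and E0: "E (\<lambda>x. 0) = 0" and compact: "compact_embedding M E"
    and kernel: "\<forall>f\<in>L2 M. E f = 0 \<longrightarrow> (AE x in M. f x = 0)"
    and g_D: "\<And>n. g n \<in> dirichlet_space M E" and g_norm: "\<And>n. D_norm M E (g n) = 1"
    and g_seminorm: "\<And>n. D_seminorm M E (g n) < 1 / (real n + 1)"
  shows False
proof -
  have sh: "subhomogeneous M E"
    using subhomogeneous_dirichlet_form[OF DF E0] .
  have g_L2: "g n \<in> L2 M" and g_seminorm_finite: "\<exists>r>0. E (\<lambda>x. g n x / r) \<le> 1" for n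
    using g_D[of n] dirichlet_space_iff[OF sh] E_le_E1 order.trans by blast+
  have energy_bound: "E (\<lambda>x. c * g n x) \<le> ennreal (c / (real n + 1))"
    if "0 < c" "c \<le> real n + 1" for c n
    using subhomogeneous_cmult_le_of_minkowski_gauge_less[OF sh g_L2 g_seminorm_finite,
        of n "1 / (real n + 1)" c] g_seminorm[of n] that
    by (simp add: D_seminorm_eq_minkowski_gauge)
  have "(\<lambda>n. E (g n)) \<longlonglongrightarrow> 0"
  proof (rule tendsto_sandwich[of "\<lambda>_. 0" _ _ "\<lambda>n. ennreal (1 / (real n + 1))"])
    show "\<forall>\<^sub>F n in sequentially. E (g n) \<le> ennreal (1 / (real n + 1))"
      using energy_bound[of 1] by simp
    have "(\<lambda>n. 1 / (real n + 1)) \<longlonglongrightarrow> 0"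
      using LIMSEQ_inverse_real_of_nat by (simp add: inverse_eq_divide add.commute)
    then show "(\<lambda>n. ennreal (1 / (real n + 1))) \<longlonglongrightarrow> 0"
      using tendsto_ennrealI[of _ 0] by simp
  qed auto
  then obtain r where r: "strict_mono r" and L2_to_0: "(\<lambda>k. L2norm M (g (r k))) \<longlonglongrightarrow> 0"
    using compact_embedding_L2norm_subseq_tendsto_0[where g = g and B = 1, OF DF compact kernel g_D] g_norm
    by auto
  have "\<forall>\<^sub>F k in sequentially. L2norm M (g (r k)) < 1/4 \<and> 3 \<le> k"
    using order_tendstoD(2)[OF L2_to_0, of "1/4"] eventually_ge_at_top[of 3]
    by (rule eventually_conj) simp
  then obtain k where small: "L2norm M (g (r k)) < 1/4" and "3 \<le> k"
    unfolding eventually_sequentially by blast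
  define m where "m = r k"
  have "3 \<le> real m"
    using seq_suble[OF r, of k] \<open>3 \<le> k\<close> unfolding m_def by linarith
  have "E (\<lambda>x. 2 * g m x) \<le> ennreal (2 / (real m + 1))"
    using energy_bound[of 2 m] \<open>3 \<le> real m\<close> by simp
  also have "\<dots> \<le> ennreal (1/2)"
    using \<open>3 \<le> real m\<close> by (intro ennreal_leI) (simp add: field_simps)
  finally have "D_norm M E (g m) \<le> 1/2"
    using small unfolding m_def by (intro D_norm_le_half) auto
  then show False
    using g_norm[of m] by simp
qed

theorem mainTheorem2:
  fixes M :: "'a::t2_space measure" and E :: "('a \<Rightarrow> real) \<Rightarrow> ennreal"
  assumes borel: "sets M = sets borel"
    and full_support: "\<forall>U. open U \<and> U \<noteq> {} \<longrightarrow> emeasure M U \<noteq> 0"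
    and DF: "dirichlet_form M E"
    and even: "even_form M E"
    and compact: "compact_embedding M E"
    and kernel: "\<forall>f\<in>L2 M. E f = 0 \<longleftrightarrow> (AE x in M. f x = 0)"
  shows "\<exists>C>0. \<forall>f\<in>dirichlet_space M E. D_norm M E f \<le> C * D_seminorm M E f"
proof (rule ccontr)
  assume no_poincare: "\<not> ?thesis"
  have E0: "E (\<lambda>x. 0) = 0"
    using even unfolding even_form_def by simp
  obtain g where "\<And>n. g n \<in> dirichlet_space M E" "\<And>n. D_norm M E (g n) = 1"
    "\<And>n. D_seminorm M E (g n) < 1 / (real n + 1)"
    using not_poincare_imp_normalized_sequence[OF subhomogeneous_dirichlet_form[OF DF E0] no_poincare]
    by blast
  moreover have "\<forall>f\<in>L2 M. E f = 0 \<longrightarrow> (AE x in M. f x = 0)"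
    using kernel by blast
  ultimately show False
    using no_normalized_sequence[OF DF E0 compact] by blast
qed

end
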